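(* If the vertex set of a graph $G$ has a partition into bisimplices, then $G$ is well-bicovered.
   Context: All graphs are finite and simple; "subgraph" means induced subgraph. A vertex is simplicial if its neighborhood induces a complete graph. A bisimplex of $G$ is a maximal clique $S$ of $G$ that contains a simplicial vertex $s$ (so $s$ has no neighbor outside $S$) and a second vertex $t\in S$ that has at most one neighbor outside $S$. A graph is well-bicovered if every vertex-inclusion-maximal induced bipartite subgraph has the same order. *)

theory Defs
  imports Main
begin

definition graph :: "'a set \<Rightarrow> ('a \<Rightarrow> 'a \<Rightarrow> bool) \<Rightarrow> bool" where
  "graph V E \<longleftrightarrow> finite V \<and> (\<forall>x y. E x y \<longrightarrow> E y x) \<and> (\<forall>x. \<not> E x x)
     \<and> (\<forall>x y. E x y \<longrightarrow> x \<in> V \<and> y \<in> V)"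

definition nbhd :: "'a set \<Rightarrow> ('a \<Rightarrow> 'a \<Rightarrow> bool) \<Rightarrow> 'a \<Rightarrow> 'a set" where
  "nbhd V E v = {u \<in> V. E v u}"

definition clique :: "'a set \<Rightarrow> ('a \<Rightarrow> 'a \<Rightarrow> bool) \<Rightarrow> 'a set \<Rightarrow> bool" where
  "clique V E S \<longleftrightarrow> S \<subseteq> V \<and> (\<forall>x\<in>S. \<forall>y\<in>S. x \<noteq> y \<longrightarrow> E x y)"

definition maximal_clique :: "'a set \<Rightarrow> ('a \<Rightarrow> 'a \<Rightarrow> bool) \<Rightarrow> 'a set \<Rightarrow> bool" where
  "maximal_clique V E S \<longleftrightarrow> clique V E S \<and> (\<forall>T. clique V E T \<and> S \<subseteq> T \<longrightarrow> T = S)"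

definition simplicial :: "'a set \<Rightarrow> ('a \<Rightarrow> 'a \<Rightarrow> bool) \<Rightarrow> 'a \<Rightarrow> bool" where
  "simplicial V E v \<longleftrightarrow> v \<in> V \<and> clique V E (nbhd V E v)"

definition bisimplex :: "'a set \<Rightarrow> ('a \<Rightarrow> 'a \<Rightarrow> bool) \<Rightarrow> 'a set \<Rightarrow> bool" where
  "bisimplex V E S \<longleftrightarrow> maximal_clique V E S \<and>
     (\<exists>s\<in>S. \<exists>t\<in>S. s \<noteq> t \<and> simplicial V E s \<and> card (nbhd V E t - S) \<le> 1)"

definition independent :: "('a \<Rightarrow> 'a \<Rightarrow> bool) \<Rightarrow> 'a set \<Rightarrow> bool" where
  "independent E A \<longleftrightarrow> (\<forall>x\<in>A. \<forall>y\<in>A. \<not> E x y)"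

definition induces_bipartite :: "('a \<Rightarrow> 'a \<Rightarrow> bool) \<Rightarrow> 'a set \<Rightarrow> bool" where
  "induces_bipartite E B \<longleftrightarrow> (\<exists>X Y. X \<union> Y = B \<and> X \<inter> Y = {} \<and> independent E X \<and> independent E Y)"

definition maximal_bipartite :: "'a set \<Rightarrow> ('a \<Rightarrow> 'a \<Rightarrow> bool) \<Rightarrow> 'a set \<Rightarrow> bool" where
  "maximal_bipartite V E B \<longleftrightarrow> B \<subseteq> V \<and> induces_bipartite E B \<and>
     (\<forall>C. C \<subseteq> V \<and> induces_bipartite E C \<and> B \<subseteq> C \<longrightarrow> C = B)"

definition well_bicovered :: "'a set \<Rightarrow> ('a \<Rightarrow> 'a \<Rightarrow> bool) \<Rightarrow> bool" where
  "well_bicovered V E \<longleftrightarrow> (\<forall>B C. maximal_bipartite V E B \<and> maximal_bipartite V E C \<longrightarrow> card B = card C)"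

definition is_partition :: "'a set \<Rightarrow> 'a set set \<Rightarrow> bool" where
  "is_partition V P \<longleftrightarrow> \<Union>P = V \<and> {} \<notin> P \<and> (\<forall>A\<in>P. \<forall>B\<in>P. A \<noteq> B \<longrightarrow> A \<inter> B = {})"

end

theory Submission
  imports Defs
begin

text \<open>A maximal induced bipartite set B meets every bisimplex S in exactly two vertices.
At most two, since each side of B meets the clique S at most once. At least two: if B \<inter> S has at
most one vertex, then the simplicial vertex s of S has at most one neighbour in B, so
maximality puts s into B and forces B \<inter> S = {s}; now s is isolated in B and t has at most one
neighbour in B - {s}, so t could be added as well. Summing over the partition, every maximal
induced bipartite set has twice as many vertices as there are blocks.\<close>

lemma induces_bipartite_subset:
  assumes "induces_bipartite E B" "C \<subseteq> B"
  shows "induces_bipartite E C"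
proof -
  obtain X Y where "X \<union> Y = B" "X \<inter> Y = {}" "independent E X" "independent E Y"
    using assms(1) unfolding induces_bipartite_def by blast
  then show ?thesis
    using assms(2) unfolding induces_bipartite_def independent_def
    by (intro exI[of _ "X \<inter> C"] exI[of _ "Y \<inter> C"]) auto
qed

text \<open>The new vertex goes to the side that does not contain its neighbour.\<close>

lemma induces_bipartite_insert:
  assumes bip: "induces_bipartite E B"
    and sym: "\<And>x y. E x y \<Longrightarrow> E y x" and "\<not> E v v"
    and one_nb: "\<forall>x\<in>B. \<forall>y\<in>B. E v x \<longrightarrow> E v y \<longrightarrow> x = y"
  shows "induces_bipartite E (insert v B)"
proof -
  obtain X Y where XY: "X \<union> Y = B" "X \<inter> Y = {}" "independent E X" "independent E Y"
    using bip unfolding induces_bipartite_def by blast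
  have add: "induces_bipartite E (insert v (X' \<union> Y'))"
    if "X' \<inter> Y' = {}" "independent E X'" "independent E Y'" "\<forall>x\<in>X'. \<not> E v x" for X' Y'
    unfolding induces_bipartite_def
  proof (intro exI conjI)
    show "insert v X' \<union> (Y' - {v}) = insert v (X' \<union> Y')" by blast
    show "insert v X' \<inter> (Y' - {v}) = {}" using that(1) by blast
    show "independent E (insert v X')"
      using that(2,4) sym \<open>\<not> E v v\<close> unfolding independent_def by blast
    show "independent E (Y' - {v})" using that(3) unfolding independent_def by blast
  qed
  show ?thesis
  proof (cases "\<forall>x\<in>X. \<not> E v x")
    case True
    with add XY show ?thesis by blast
  next
    case False
    then have "\<forall>y\<in>Y. \<not> E v y"
      using one_nb XY(1,2) by blast
    with add[of Y X] XY show ?thesis by (simp add: Un_commute Int_commute)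
  qed
qed

text \<open>Remove s, add t, then add s back: its only possible neighbour is now t.\<close>

lemma induces_bipartite_insert_beside_isolated:
  assumes bip: "induces_bipartite E B"
    and sym: "\<And>x y. E x y \<Longrightarrow> E y x" and irr: "\<And>x. \<not> E x x"
    and "s \<in> B" and isolated: "\<forall>x\<in>B. \<not> E s x"
    and one_nb: "\<forall>x\<in>B - {s}. \<forall>y\<in>B - {s}. E t x \<longrightarrow> E t y \<longrightarrow> x = y"
  shows "induces_bipartite E (insert t B)"
proof -
  have "induces_bipartite E (insert t (B - {s}))"
    using induces_bipartite_insert[OF induces_bipartite_subset[OF bip] sym irr[of t] one_nb] by blast
  moreover have "\<forall>x\<in>insert t (B - {s}). \<forall>y\<in>insert t (B - {s}). E s x \<longrightarrow> E s y \<longrightarrow> x = y"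
    using isolated by blast
  ultimately have "induces_bipartite E (insert s (insert t (B - {s})))"
    using induces_bipartite_insert[where E = E, OF _ sym irr[of s]] by blast
  moreover have "insert s (insert t (B - {s})) = insert t B" using \<open>s \<in> B\<close> by blast
  ultimately show ?thesis by simp
qed

lemma maximal_bipartite_insert:
  assumes "maximal_bipartite V E B" "v \<in> V" "induces_bipartite E (insert v B)"
  shows "v \<in> B"
  using assms unfolding maximal_bipartite_def by blast

lemma card_independent_inter_clique_le_1:
  assumes "independent E X" "clique V E S" "finite S"
  shows "card (X \<inter> S) \<le> 1"
proof -
  have "finite (X \<inter> S)" using assms(3) by simp
  moreover have "\<forall>x\<in>X \<inter> S. \<forall>y\<in>X \<inter> S. x = y"
    using assms(1,2) unfolding independent_def clique_def by blast
  ultimately show ?thesis using card_le_Suc0_iff_eq by (metis One_nat_def)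
qed

lemma card_bipartite_inter_clique_le_2:
  assumes "induces_bipartite E B" "clique V E S" "finite S"
  shows "card (B \<inter> S) \<le> 2"
proof -
  obtain X Y where XY: "X \<union> Y = B" "independent E X" "independent E Y"
    using assms(1) unfolding induces_bipartite_def by blast
  then have "B \<inter> S = (X \<inter> S) \<union> (Y \<inter> S)" by blast
  then have "card (B \<inter> S) \<le> card (X \<inter> S) + card (Y \<inter> S)"
    by (simp add: card_Un_le)
  also have "\<dots> \<le> 2"
    using card_independent_inter_clique_le_1[OF XY(2) assms(2,3)]
      card_independent_inter_clique_le_1[OF XY(3) assms(2,3)] by simp
  finally show ?thesis .
qed

lemma nbhd_simplicial_subset_maximal_clique:
  assumes "graph V E" "maximal_clique V E S" "s \<in> S" "simplicial V E s"
  shows "nbhd V E s \<subseteq> S"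
proof -
  have "clique V E (insert s (nbhd V E s))"
    using assms(1,4) unfolding simplicial_def clique_def nbhd_def graph_def by blast
  moreover have "S \<subseteq> insert s (nbhd V E s)"
    using assms(2,3) unfolding maximal_clique_def clique_def nbhd_def by auto
  ultimately show ?thesis
    using assms(2) unfolding maximal_clique_def by blast
qed

lemma two_le_card_maximal_bipartite_inter_bisimplex:
  assumes G: "graph V E" and M: "maximal_bipartite V E B" and "bisimplex V E S"
  shows "2 \<le> card (B \<inter> S)"
proof (rule ccontr)
  have fin: "finite V" and sym: "\<And>x y. E x y \<Longrightarrow> E y x" and irr: "\<And>x. \<not> E x x"
    and in_V: "\<And>x y. E x y \<Longrightarrow> y \<in> V"
    using G unfolding graph_def by blast+
  obtain s t where st: "s \<in> S" "t \<in> S" "s \<noteq> t" "simplicial V E s"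
    and t_out: "card (nbhd V E t - S) \<le> 1" and mc: "maximal_clique V E S"
    using \<open>bisimplex V E S\<close> unfolding bisimplex_def by blast
  have SV: "S \<subseteq> V" using mc unfolding maximal_clique_def clique_def by blast
  have bip: "induces_bipartite E B" using M unfolding maximal_bipartite_def by blast
  have nb_s: "E s u \<Longrightarrow> u \<in> S" for u
    using nbhd_simplicial_subset_maximal_clique[OF G mc st(1,4)] in_V
    unfolding nbhd_def by blast
  assume "\<not> 2 \<le> card (B \<inter> S)"
  moreover have "finite (B \<inter> S)" using SV fin finite_subset by blast
  ultimately have small: "\<forall>x\<in>B \<inter> S. \<forall>y\<in>B \<inter> S. x = y"
    using card_le_Suc0_iff_eq by fastforce
  have "induces_bipartite E (insert s B)"
  proof (rule induces_bipartite_insert[OF bip sym irr])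
    show "\<forall>x\<in>B. \<forall>y\<in>B. E s x \<longrightarrow> E s y \<longrightarrow> x = y"
      using small nb_s by blast
  qed
  then have "s \<in> B"
    using maximal_bipartite_insert[OF M] st(1) SV by blast
  then have BS: "B \<inter> S = {s}" using small st(1) by blast
  have "\<forall>x\<in>B. \<not> E s x" using nb_s BS irr by (metis IntI singletonD)
  moreover have "finite (nbhd V E t - S)" using fin unfolding nbhd_def by simp
  then have "\<forall>x\<in>nbhd V E t - S. \<forall>y\<in>nbhd V E t - S. x = y"
    using t_out card_le_Suc0_iff_eq by (metis One_nat_def)
  then have "\<forall>x\<in>B - {s}. \<forall>y\<in>B - {s}. E t x \<longrightarrow> E t y \<longrightarrow> x = y"
    using BS in_V unfolding nbhd_def by blast
  ultimately have "induces_bipartite E (insert t B)"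
    using induces_bipartite_insert_beside_isolated[OF bip sym irr \<open>s \<in> B\<close>] by blast
  then have "t \<in> B"
    using maximal_bipartite_insert[OF M] st(2) SV by blast
  with BS st(2,3) show False by auto
qed

lemma card_maximal_bipartite_inter_bisimplex:
  assumes "graph V E" "maximal_bipartite V E B" "bisimplex V E S"
  shows "card (B \<inter> S) = 2"
proof -
  have "clique V E S"
    using assms(3) unfolding bisimplex_def maximal_clique_def by blast
  moreover have "finite S"
    using \<open>clique V E S\<close> assms(1) unfolding clique_def graph_def
    by (meson finite_subset)
  moreover have "induces_bipartite E B"
    using assms(2) unfolding maximal_bipartite_def by blast
  ultimately have "card (B \<inter> S) \<le> 2"
    by (intro card_bipartite_inter_clique_le_2)
  with two_le_card_maximal_bipartite_inter_bisimplex[OF assms] show ?thesis by simp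
qed

lemma card_maximal_bipartite:
  assumes G: "graph V E" and P: "is_partition V P" and bs: "\<forall>S\<in>P. bisimplex V E S"
    and M: "maximal_bipartite V E B"
  shows "card B = 2 * card P"
proof -
  have fin: "finite V" using G unfolding graph_def by blast
  have "finite P" using P fin unfolding is_partition_def by (metis finite_UnionD)
  have BV: "B \<subseteq> V" using M unfolding maximal_bipartite_def by blast
  then have "B = (\<Union>S\<in>P. B \<inter> S)" using P unfolding is_partition_def by blast
  then have "card B = card (\<Union>S\<in>P. B \<inter> S)" by simp
  also have "\<dots> = (\<Sum>S\<in>P. card (B \<inter> S))"
  proof (rule card_UN_disjoint[OF \<open>finite P\<close>])
    show "\<forall>S\<in>P. finite (B \<inter> S)" using BV fin finite_subset by blast
    show "\<forall>S\<in>P. \<forall>S'\<in>P. S \<noteq> S' \<longrightarrow> B \<inter> S \<inter> (B \<inter> S') = {}"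
      using P unfolding is_partition_def by blast
  qed
  also have "\<dots> = (\<Sum>S\<in>P. 2)"
    using card_maximal_bipartite_inter_bisimplex[OF G M] bs by simp
  finally show ?thesis by simp
qed

theorem mainTheorem17:
  fixes V :: "'a set" and E :: "'a \<Rightarrow> 'a \<Rightarrow> bool" and P :: "'a set set"
  assumes "graph V E"
    and "is_partition V P"
    and "\<forall>S\<in>P. bisimplex V E S"
  shows "well_bicovered V E"
  using card_maximal_bipartite[OF assms] unfolding well_bicovered_def by simp

end
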